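(* Let $k,d,r,\delta$ be positive integers with $\delta\le d$, $r \ge 1$, and suppose there exists a systematic $[k+d-1,k,d]$ MDS code over $\mathbb{F}_q$. Then there exists an $(r,\delta)_i$ linear code over $\mathbb{F}_q$ of length $n = k+d-1+\left(\lceil k/r\rceil-1\right)(\delta-1)$, dimension $k$ and minimum distance $d$, i.e. an $(r,\delta)_i$ code attaining $d = n-k+1-\left(\lceil k/r\rceil-1\right)(\delta-1)$ with equality.
   Context: Coordinate $i$ of a linear code $\mathcal{C}$ of length $n$ has locality $(r,\delta)$ if there is $S_i\subseteq[n]$ with $i\in S_i$, $|S_i|\le r+\delta-1$, such that the punctured code $\mathcal{C}|_{S_i}$ (delete coordinates outside $S_i$) has minimum distance at least $\delta$. An $(r,\delta)_i$ code is a systematic $[n,k,d]$ linear code (information symbols in the first $k$ coordinates) in which all $k$ information coordinates have locality $(r,\delta)$. An MDS code is an $[N,K,D]$ code with $D=N-K+1$. *)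

theory Defs
  imports Complex_Main
begin

text \<open>Vectors of length n over a finite field 'a are modelled as functions
nat \<Rightarrow> 'a vanishing outside the coordinate set {..<n}.\<close>

definition vec_space :: "nat \<Rightarrow> (nat \<Rightarrow> 'a::zero) set" where
  "vec_space n = {x. \<forall>i\<ge>n. x i = 0}"

definition linear_code :: "nat \<Rightarrow> (nat \<Rightarrow> 'a::field) set \<Rightarrow> bool" where
  "linear_code n C \<longleftrightarrow> C \<subseteq> vec_space n \<and> (\<lambda>_. 0) \<in> C \<and>
     (\<forall>x\<in>C. \<forall>y\<in>C. (\<lambda>i. x i + y i) \<in> C) \<and>
     (\<forall>a. \<forall>x\<in>C. (\<lambda>i. a * x i) \<in> C)"

definition systematic_code :: "nat \<Rightarrow> nat \<Rightarrow> (nat \<Rightarrow> 'a::field) set \<Rightarrow> bool" where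
  "systematic_code n k C \<longleftrightarrow> k \<le> n \<and> linear_code n C \<and>
     bij_betw (\<lambda>c i. if i < k then c i else 0) C (vec_space k)"

definition weight_on :: "nat set \<Rightarrow> (nat \<Rightarrow> 'a::zero) \<Rightarrow> nat" where
  "weight_on S c = card {i\<in>S. c i \<noteq> 0}"

definition min_dist_eq :: "nat \<Rightarrow> (nat \<Rightarrow> 'a::zero) set \<Rightarrow> nat \<Rightarrow> bool" where
  "min_dist_eq n C d \<longleftrightarrow>
     (\<forall>c\<in>C. c \<noteq> (\<lambda>_. 0) \<longrightarrow> weight_on {..<n} c \<ge> d) \<and>
     (\<exists>c\<in>C. c \<noteq> (\<lambda>_. 0) \<and> weight_on {..<n} c = d)"

text \<open>The punctured code C|_S (codewords restricted to S) has minimum distance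
at least \<delta>: every codeword nonzero on S has at least \<delta> nonzero entries in S.\<close>
definition punct_dist_ge :: "(nat \<Rightarrow> 'a::zero) set \<Rightarrow> nat set \<Rightarrow> nat \<Rightarrow> bool" where
  "punct_dist_ge C S \<delta> \<longleftrightarrow>
     (\<forall>c\<in>C. (\<exists>j\<in>S. c j \<noteq> 0) \<longrightarrow> weight_on S c \<ge> \<delta>)"

definition has_locality :: "nat \<Rightarrow> (nat \<Rightarrow> 'a::zero) set \<Rightarrow> nat \<Rightarrow> nat \<Rightarrow> nat \<Rightarrow> bool" where
  "has_locality n C r \<delta> i \<longleftrightarrow>
     (\<exists>S. S \<subseteq> {..<n} \<and> i \<in> S \<and> card S \<le> r + \<delta> - 1 \<and> punct_dist_ge C S \<delta>)"

definition rdelta_i_code :: "nat \<Rightarrow> nat \<Rightarrow> nat \<Rightarrow> nat \<Rightarrow> nat \<Rightarrow> (nat \<Rightarrow> 'a::field) set \<Rightarrow> bool" where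
  "rdelta_i_code n k d r \<delta> C \<longleftrightarrow> systematic_code n k C \<and> min_dist_eq n C d \<and>
     (\<forall>i<k. has_locality n C r \<delta> i)"

end

theory Submission
  imports Defs
begin

text \<open>Split the information symbols into \<open>m = \<lceil>k/r\<rceil>\<close> groups of at most \<open>r\<close>. Encode each
group on its own with the systematic MDS code and keep the first \<open>\<delta> - 1\<close> parity symbols of
every such encoding; of the full codeword keep the information and its last \<open>d - \<delta>\<close> parity
symbols. By linearity the first \<open>\<delta> - 1\<close> parities of a codeword are the sums of the
corresponding group parities, so each of its nonzero coordinates shows up as a nonzero
coordinate of the new word: the distance is still at least \<open>d\<close>, and a unit information
vector attains \<open>d\<close>. On a group and its local parities the new word coincides with the MDS
encoding of that group alone, a codeword of weight at least \<open>d\<close> that is supported on the group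
and the parity positions; dropping the \<open>d - \<delta>\<close> global parities leaves weight at least \<open>\<delta>\<close>.\<close>

lemma weight_on_le_card: "finite S \<Longrightarrow> weight_on S c \<le> card S"
  unfolding weight_on_def by (intro card_mono) auto

lemma weight_on_Un_disjoint:
  "finite A \<Longrightarrow> finite B \<Longrightarrow> A \<inter> B = {} \<Longrightarrow>
   weight_on (A \<union> B) c = weight_on A c + weight_on B c"
  unfolding weight_on_def by (subst card_Un_disjoint[symmetric]) (auto intro: arg_cong[where f = card])

lemma weight_on_image:
  assumes "inj_on f A"
  shows "weight_on (f ` A) c = card {x \<in> A. c (f x) \<noteq> 0}"
proof -
  have "{y \<in> f ` A. c y \<noteq> 0} = f ` {x \<in> A. c (f x) \<noteq> 0}" by blast
  then show ?thesis
    unfolding weight_on_def using assms by (simp add: card_image inj_on_subset)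
qed

lemma weight_on_cong: "(\<And>i. i \<in> A \<Longrightarrow> c i = c' i) \<Longrightarrow> weight_on A c = weight_on A c'"
  unfolding weight_on_def by (rule arg_cong[where f = card]) auto

lemma weight_on_vanishing:
  "A \<subseteq> B \<Longrightarrow> (\<And>i. i \<in> B - A \<Longrightarrow> c i = 0) \<Longrightarrow> weight_on B c = weight_on A c"
  unfolding weight_on_def by (rule arg_cong[where f = card]) blast

lemma linear_code_zero: "linear_code n C \<Longrightarrow> (\<lambda>_. 0) \<in> C"
  unfolding linear_code_def by auto

lemma linear_code_add: "linear_code n C \<Longrightarrow> x \<in> C \<Longrightarrow> y \<in> C \<Longrightarrow> (\<lambda>i. x i + y i) \<in> C"
  unfolding linear_code_def by auto

lemma linear_code_scale: "linear_code n C \<Longrightarrow> x \<in> C \<Longrightarrow> (\<lambda>i. a * x i) \<in> C"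
  unfolding linear_code_def by auto

definition info_part :: "nat \<Rightarrow> (nat \<Rightarrow> 'a::zero) \<Rightarrow> nat \<Rightarrow> 'a" where
  "info_part k c = (\<lambda>i. if i < k then c i else 0)"

lemma systematic_code_iff:
  "systematic_code n k C \<longleftrightarrow>
     k \<le> n \<and> linear_code n C \<and> bij_betw (info_part k) C (vec_space k)"
  unfolding systematic_code_def info_part_def ..

locale systematic =
  fixes n k :: nat and C :: "(nat \<Rightarrow> 'a::field) set"
  assumes systematic: "systematic_code n k C"
begin

lemma linear: "linear_code n C"
  and bij_info_part: "bij_betw (info_part k) C (vec_space k)"
  using systematic unfolding systematic_code_iff by auto

definition encode :: "(nat \<Rightarrow> 'a) \<Rightarrow> nat \<Rightarrow> 'a" where
  "encode = the_inv_into C (info_part k)"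

lemma encode_in: "y \<in> vec_space k \<Longrightarrow> encode y \<in> C"
  unfolding encode_def using bij_info_part by (metis bij_betw_def the_inv_into_into order_refl)

lemma info_part_encode: "y \<in> vec_space k \<Longrightarrow> info_part k (encode y) = y"
  unfolding encode_def using bij_info_part by (metis bij_betw_def f_the_inv_into_f)

lemma encode_info_part: "c \<in> C \<Longrightarrow> encode (info_part k c) = c"
  unfolding encode_def using bij_info_part by (metis bij_betw_def the_inv_into_f_f)

lemma encode_unique: "c \<in> C \<Longrightarrow> info_part k c = y \<Longrightarrow> encode y = c"
  using encode_info_part by blast

lemma encode_agrees:
  assumes "y \<in> vec_space k" "i < k"
  shows "encode y i = y i"
proof -
  have "info_part k (encode y) i = y i" using info_part_encode[OF assms(1)] by simp
  then show ?thesis using assms(2) by (simp add: info_part_def)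
qed

lemma encode_add:
  assumes "y \<in> vec_space k" "z \<in> vec_space k"
  shows "encode (\<lambda>i. y i + z i) = (\<lambda>i. encode y i + encode z i)"
proof (rule encode_unique)
  show "(\<lambda>i. encode y i + encode z i) \<in> C"
    using assms by (intro linear_code_add[OF linear] encode_in)
  show "info_part k (\<lambda>i. encode y i + encode z i) = (\<lambda>i. y i + z i)"
    using assms by (auto simp: info_part_def vec_space_def encode_agrees)
qed

lemma encode_scale:
  assumes "y \<in> vec_space k"
  shows "encode (\<lambda>i. a * y i) = (\<lambda>i. a * encode y i)"
proof (rule encode_unique)
  show "(\<lambda>i. a * encode y i) \<in> C"
    using assms by (intro linear_code_scale[OF linear] encode_in)
  show "info_part k (\<lambda>i. a * encode y i) = (\<lambda>i. a * y i)"
    using assms by (auto simp: info_part_def vec_space_def encode_agrees)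
qed

lemma encode_zero: "encode (\<lambda>_. 0) = (\<lambda>_. 0)"
  by (rule encode_unique[OF linear_code_zero[OF linear]]) (simp add: info_part_def)

lemma encode_sum:
  "finite J \<Longrightarrow> (\<And>j. j \<in> J \<Longrightarrow> y j \<in> vec_space k) \<Longrightarrow>
   encode (\<lambda>i. \<Sum>j\<in>J. y j i) = (\<lambda>i. \<Sum>j\<in>J. encode (y j) i)"
proof (induction J rule: finite_induct)
  case empty
  then show ?case using encode_zero by simp
next
  case (insert j J)
  have "(\<lambda>i. \<Sum>j\<in>J. y j i) \<in> vec_space k"
    using insert.prems unfolding vec_space_def by auto
  then show ?case
    using insert encode_add[of "y j" "\<lambda>i. \<Sum>j\<in>J. y j i"] by simp
qed

end

lemma linear_code_image:
  fixes \<Phi> :: "(nat \<Rightarrow> 'a::field) \<Rightarrow> nat \<Rightarrow> 'a"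
  assumes lin: "linear_code n C"
    and add: "\<And>x y. \<Phi> (\<lambda>i. x i + y i) = (\<lambda>i. \<Phi> x i + \<Phi> y i)"
    and scale: "\<And>a x. \<Phi> (\<lambda>i. a * x i) = (\<lambda>i. a * \<Phi> x i)"
    and range: "\<And>c. \<Phi> c \<in> vec_space N"
  shows "linear_code N (\<Phi> ` C)"
  unfolding linear_code_def
proof (intro conjI ballI allI)
  show "\<Phi> ` C \<subseteq> vec_space N" using range by auto
  have "\<Phi> (\<lambda>_. 0) = (\<lambda>_. 0)" using scale[of 0 "\<lambda>_. 0"] by simp
  then show "(\<lambda>_. 0) \<in> \<Phi> ` C" using linear_code_zero[OF lin] by (metis image_eqI)
next
  fix x y assume "x \<in> \<Phi> ` C" "y \<in> \<Phi> ` C"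
  then obtain x' y' where "x' \<in> C" "y' \<in> C" "x = \<Phi> x'" "y = \<Phi> y'" by blast
  then show "(\<lambda>i. x i + y i) \<in> \<Phi> ` C"
    using add[of x' y'] linear_code_add[OF lin] by (metis image_eqI)
next
  fix a x assume "x \<in> \<Phi> ` C"
  then obtain x' where "x' \<in> C" "x = \<Phi> x'" by blast
  then show "(\<lambda>i. a * x i) \<in> \<Phi> ` C"
    using scale[of a x'] linear_code_scale[OF lin] by (metis image_eqI)
qed

lemma systematic_code_image:
  fixes \<Phi> :: "(nat \<Rightarrow> 'a::field) \<Rightarrow> nat \<Rightarrow> 'a"
  assumes sys: "systematic_code n k C" and "k \<le> N"
    and add: "\<And>x y. \<Phi> (\<lambda>i. x i + y i) = (\<lambda>i. \<Phi> x i + \<Phi> y i)"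
    and scale: "\<And>a x. \<Phi> (\<lambda>i. a * x i) = (\<lambda>i. a * \<Phi> x i)"
    and range: "\<And>c. \<Phi> c \<in> vec_space N"
    and info: "\<And>c. info_part k (\<Phi> c) = info_part k c"
  shows "systematic_code N k (\<Phi> ` C)"
proof -
  interpret systematic n k C using sys by unfold_locales
  have "inj_on (info_part k) (\<Phi> ` C)"
  proof (rule inj_onI)
    fix x y assume "x \<in> \<Phi> ` C" "y \<in> \<Phi> ` C" "info_part k x = info_part k y"
    then obtain x' y' where "x' \<in> C" "y' \<in> C" "x = \<Phi> x'" "y = \<Phi> y'"
      "info_part k x' = info_part k y'" using info by auto
    then show "x = y" using encode_info_part by metis
  qed
  moreover have "info_part k ` \<Phi> ` C = vec_space k"
    using bij_info_part by (simp add: image_image info bij_betw_def)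
  moreover have "linear_code N (\<Phi> ` C)"
    by (rule linear_code_image[OF linear]) (rule add scale range)+
  ultimately show ?thesis
    unfolding systematic_code_iff bij_betw_def using \<open>k \<le> N\<close> by simp
qed

lemma block_index_inj:
  fixes a D m :: nat
  shows "inj_on (\<lambda>(j, i). i + j * D) ({..<m} \<times> {a..<a + D})"
proof (rule inj_onI, clarsimp)
  fix j i j' i' :: nat
  assume "a \<le> i" "i < a + D" "a \<le> i'" "i' < a + D" "i + j * D = i' + j' * D"
  then have eq: "(i - a) + j * D = (i' - a) + j' * D" and "i - a < D" "i' - a < D" by auto
  have "j = ((i - a) + j * D) div D" using \<open>i - a < D\<close> by simp
  also have "\<dots> = j'" unfolding eq using \<open>i' - a < D\<close> by simp
  finally have "j = j'" .
  then show "j = j' \<and> i = i'" using eq \<open>a \<le> i\<close> \<open>a \<le> i'\<close> by auto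
qed

lemma block_index_image:
  fixes a D m :: nat
  shows "(\<lambda>(j, i). i + j * D) ` ({..<m} \<times> {a..<a + D}) = {a..<a + m * D}"
proof (intro equalityI subsetI)
  fix x assume "x \<in> (\<lambda>(j, i). i + j * D) ` ({..<m} \<times> {a..<a + D})"
  then obtain j i where "j < m" "a \<le> i" "i < a + D" "x = i + j * D" by auto
  moreover have "j * D + D \<le> m * D" using \<open>j < m\<close> by (metis mult_Suc Suc_leI mult_le_mono1 add.commute)
  ultimately show "x \<in> {a..<a + m * D}" by auto
next
  fix x assume x: "x \<in> {a..<a + m * D}"
  then have "0 < D" by (cases D) auto
  have "(x - a) div D < m" using x \<open>0 < D\<close> by (auto simp: div_less_iff_less_mult mult.commute)
  moreover have "a + (x - a) mod D \<in> {a..<a + D}" using \<open>0 < D\<close> by simp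
  moreover have "x = (a + (x - a) mod D) + ((x - a) div D) * D" using x by simp
  ultimately show "x \<in> (\<lambda>(j, i). i + j * D) ` ({..<m} \<times> {a..<a + D})"
    by (intro image_eqI[where x = "((x - a) div D, a + (x - a) mod D)"]) auto
qed

lemma div_less_of_less_le_mult:
  fixes i k r m :: nat
  assumes "i < k" "k \<le> r * m"
  shows "i div r < m"
proof -
  have "i < m * r" using assms by (metis mult.commute order_less_le_trans)
  then show ?thesis by (metis div_less_iff_less_mult gr0I mult_0_right not_less_zero)
qed

definition info_group :: "nat \<Rightarrow> nat \<Rightarrow> nat \<Rightarrow> (nat \<Rightarrow> 'a::zero) \<Rightarrow> nat \<Rightarrow> 'a" where
  "info_group r k j c = (\<lambda>i. if i < k \<and> i div r = j then c i else 0)"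

lemma info_group_in_vec_space: "info_group r k j c \<in> vec_space k"
  unfolding info_group_def vec_space_def by simp

lemma info_group_add:
  "info_group r k j (\<lambda>i. x i + y i) = (\<lambda>i. info_group r k j x i + (info_group r k j y i :: 'a::monoid_add))"
  unfolding info_group_def by (simp add: fun_eq_iff)

lemma info_group_scale:
  "info_group r k j (\<lambda>i. a * x i) = (\<lambda>i. a * (info_group r k j x i :: 'a::mult_zero))"
  unfolding info_group_def by (simp add: fun_eq_iff)

lemma info_group_eq_info_part: "info_group r k j c i = (if i div r = j then info_part k c i else 0)"
  unfolding info_group_def info_part_def by simp

lemma sum_info_groups:
  fixes c :: "nat \<Rightarrow> 'a::comm_monoid_add"
  assumes "k \<le> r * m"
  shows "(\<lambda>i. \<Sum>j<m. info_group r k j c i) = info_part k c"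
proof
  fix i
  show "(\<Sum>j<m. info_group r k j c i) = info_part k c i"
  proof (cases "i < k")
    case True
    then have "i div r < m" using assms by (rule div_less_of_less_le_mult)
    then show ?thesis by (simp add: info_group_eq_info_part)
  next
    case False
    then have "info_part k c i = 0" unfolding info_part_def by simp
    then show ?thesis by (simp add: info_group_eq_info_part)
  qed
qed

lemma card_info_group_le:
  assumes "0 < r"
  shows "card {i. i < k \<and> i div r = j} \<le> r"
proof -
  have "{i. i < k \<and> i div r = j} \<subseteq> {j * r..<j * r + r}"
  proof
    fix i assume "i \<in> {i. i < k \<and> i div r = j}"
    then have "i div r = j" by simp
    moreover have "i div r * r \<le> i" by (rule div_times_less_eq_dividend)
    moreover have "i < r + i div r * r" using assms by (intro dividend_less_div_times)
    ultimately show "i \<in> {j * r..<j * r + r}" by simp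
  qed
  then have "card {i. i < k \<and> i div r = j} \<le> card {j * r..<j * r + r}"
    by (intro card_mono) auto
  then show ?thesis by simp
qed

text \<open>\<open>D\<close> plays the role of \<open>\<delta> - 1\<close>, and \<open>m\<close> is the number of local groups.\<close>

locale local_extension = systematic n k C for n k and C :: "(nat \<Rightarrow> 'a::field) set" +
  fixes d r m D :: nat
  assumes length_eq: "n = k + d - 1"
    and min_dist: "min_dist_eq n C d"
    and k_pos: "0 < k"
    and groups_cover: "k \<le> r * m"
    and D_less: "D < d"
begin

abbreviation ext_length :: nat where
  "ext_length \<equiv> n + (m - 1) * D"

lemma r_pos: "0 < r" and m_pos: "0 < m"
proof -
  have "0 < r * m" using k_pos groups_cover by linarith
  then show "0 < r" "0 < m" by simp_all
qed

lemma parity_split: "k + D \<le> n"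
  using length_eq D_less by simp

lemma blocks_length: "m * D = (m - 1) * D + D"
  using m_pos by (cases m) auto

lemma blocks_le_ext_length: "k + m * D \<le> ext_length"
  using parity_split blocks_length by simp

text \<open>Coordinate \<open>k + j * D + p\<close> (\<open>p < D\<close>) carries parity symbol
\<open>k + p\<close> of the encoding of group \<open>j\<close> alone; the global parities \<open>k + D ..< n\<close> are shifted
behind the \<open>m\<close> local blocks.\<close>

definition extend :: "(nat \<Rightarrow> 'a) \<Rightarrow> nat \<Rightarrow> 'a" where
  "extend c i =
     (if i < k then c i
      else if i < k + m * D then encode (info_group r k ((i - k) div D) c) (k + (i - k) mod D)
      else if i < ext_length then c (i - (m - 1) * D)
      else 0)"

lemma extend_info: "i < k \<Longrightarrow> extend c i = c i"
  unfolding extend_def by simp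

lemma extend_local:
  assumes "j < m" "k \<le> i" "i < k + D"
  shows "extend c (i + j * D) = encode (info_group r k j c) i"
proof -
  have "(j, i) \<in> {..<m} \<times> {k..<k + D}" using assms by simp
  then have "i + j * D \<in> {k..<k + m * D}"
    unfolding block_index_image[of D m k, symmetric] by (rule image_eqI[rotated]) simp
  moreover have "(i + j * D - k) div D = j" "k + (i + j * D - k) mod D = i"
  proof -
    define p where "p = i - k"
    have "i = k + p" and "p < D" using assms unfolding p_def by simp_all
    then show "(i + j * D - k) div D = j" "k + (i + j * D - k) mod D = i"
      by simp_all
  qed
  ultimately show ?thesis
    unfolding extend_def by simp
qed

lemma extend_global:
  assumes "k + D \<le> i" "i < n"
  shows "extend c (i + (m - 1) * D) = c i"
proof -
  have "k + m * D \<le> i + (m - 1) * D" using assms blocks_length by simp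
  then show ?thesis using assms unfolding extend_def by simp
qed

lemma extend_in_vec_space: "extend c \<in> vec_space ext_length"
  unfolding extend_def vec_space_def using blocks_le_ext_length by simp

lemma info_part_extend: "info_part k (extend c) = info_part k c"
  unfolding info_part_def extend_def by (simp add: fun_eq_iff)

lemma extend_add: "extend (\<lambda>i. x i + y i) = (\<lambda>i. extend x i + extend y i)"
proof -
  have "encode (info_group r k j (\<lambda>i. x i + y i)) =
      (\<lambda>i. encode (info_group r k j x) i + encode (info_group r k j y) i)" for j
    unfolding info_group_add by (intro encode_add info_group_in_vec_space)
  then show ?thesis
    unfolding extend_def by (simp add: fun_eq_iff)
qed

lemma extend_scale: "extend (\<lambda>i. a * x i) = (\<lambda>i. a * extend x i)"
proof -
  have "encode (info_group r k j (\<lambda>i. a * x i)) = (\<lambda>i. a * encode (info_group r k j x) i)" for j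
    unfolding info_group_scale by (intro encode_scale info_group_in_vec_space)
  then show ?thesis
    unfolding extend_def by (simp add: fun_eq_iff)
qed

lemma extend_zero: "extend (\<lambda>_. 0) = (\<lambda>_. 0)"
  using extend_scale[of 0 "\<lambda>_. 0"] by simp

lemma min_dist_le_weight: "c \<in> C \<Longrightarrow> c \<noteq> (\<lambda>_. 0) \<Longrightarrow> d \<le> weight_on {..<n} c"
  using min_dist unfolding min_dist_eq_def by blast

lemma weight_on_code_parts:
  "weight_on {..<n} c = weight_on {..<k} c + weight_on {k..<k + D} c + weight_on {k + D..<n} c"
proof -
  have parts: "{..<n} = ({..<k} \<union> {k..<k + D}) \<union> {k + D..<n}" using parity_split by auto
  have "weight_on {..<n} c = weight_on ({..<k} \<union> {k..<k + D}) c + weight_on {k + D..<n} c"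
    unfolding parts by (rule weight_on_Un_disjoint) auto
  moreover have "weight_on ({..<k} \<union> {k..<k + D}) c = weight_on {..<k} c + weight_on {k..<k + D} c"
    by (rule weight_on_Un_disjoint) auto
  ultimately show ?thesis by simp
qed

lemma weight_on_local_blocks:
  "weight_on {k..<k + m * D} (extend c) =
     card {(j, i) \<in> {..<m} \<times> {k..<k + D}. encode (info_group r k j c) i \<noteq> 0}"
proof -
  have "weight_on {k..<k + m * D} (extend c) =
      card {x \<in> {..<m} \<times> {k..<k + D}. extend c (case x of (j, i) \<Rightarrow> i + j * D) \<noteq> 0}"
    unfolding block_index_image[of D m k, symmetric] by (rule weight_on_image[OF block_index_inj])
  also have "\<dots> = card {(j, i) \<in> {..<m} \<times> {k..<k + D}. encode (info_group r k j c) i \<noteq> 0}"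
  proof (rule arg_cong[where f = card], rule set_eqI)
    fix x :: "nat \<times> nat"
    obtain j i where x: "x = (j, i)" by fastforce
    have "(j, i) \<in> {..<m} \<times> {k..<k + D} \<Longrightarrow> extend c (i + j * D) = encode (info_group r k j c) i"
      by (intro extend_local) auto
    then show "x \<in> {x \<in> {..<m} \<times> {k..<k + D}. extend c (case x of (j, i) \<Rightarrow> i + j * D) \<noteq> 0} \<longleftrightarrow>
        x \<in> {(j, i) \<in> {..<m} \<times> {k..<k + D}. encode (info_group r k j c) i \<noteq> 0}"
      unfolding x by auto
  qed
  finally show ?thesis .
qed

lemma weight_extend:
  "weight_on {..<ext_length} (extend c) =
     weight_on {..<k} c + weight_on {k..<k + m * D} (extend c) + weight_on {k + D..<n} c"
proof -
  let ?shift = "\<lambda>i. i + (m - 1) * D"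
  have shifted: "?shift ` {k + D..<n} = {k + m * D..<ext_length}"
  proof -
    have start: "k + D + (m - 1) * D = k + m * D" using blocks_length by simp
    show ?thesis unfolding image_add_atLeastLessThan' start ..
  qed
  have "weight_on {..<ext_length} (extend c) =
      weight_on ({..<k} \<union> {k..<k + m * D}) (extend c) + weight_on (?shift ` {k + D..<n}) (extend c)"
  proof -
    have parts: "{..<ext_length} = ({..<k} \<union> {k..<k + m * D}) \<union> ?shift ` {k + D..<n}"
      unfolding shifted using blocks_le_ext_length by auto
    show ?thesis
      unfolding parts by (rule weight_on_Un_disjoint) (use blocks_length in auto)
  qed
  moreover have "weight_on ({..<k} \<union> {k..<k + m * D}) (extend c) =
      weight_on {..<k} (extend c) + weight_on {k..<k + m * D} (extend c)"
    by (rule weight_on_Un_disjoint) auto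
  moreover have "weight_on {..<k} (extend c) = weight_on {..<k} c"
    by (rule weight_on_cong) (simp add: extend_info)
  moreover have "weight_on (?shift ` {k + D..<n}) (extend c) = weight_on {k + D..<n} c"
  proof -
    have "weight_on (?shift ` {k + D..<n}) (extend c) =
        card {i \<in> {k + D..<n}. extend c (i + (m - 1) * D) \<noteq> 0}"
      by (rule weight_on_image) simp
    also have "\<dots> = weight_on {k + D..<n} c"
      unfolding weight_on_def
      by (intro arg_cong[where f = card] Collect_cong conj_cong refl)
        (metis atLeastLessThan_iff extend_global)
    finally show ?thesis .
  qed
  ultimately show ?thesis by simp
qed

lemma sum_encode_info_groups:
  assumes "c \<in> C"
  shows "c i = (\<Sum>j<m. encode (info_group r k j c) i)"
proof -
  have "c = encode (\<lambda>i. \<Sum>j<m. info_group r k j c i)"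
    unfolding sum_info_groups[OF groups_cover] using encode_info_part[OF assms] by simp
  also have "\<dots> = (\<lambda>i. \<Sum>j<m. encode (info_group r k j c) i)"
    by (rule encode_sum) (simp_all add: info_group_in_vec_space)
  finally show ?thesis by (rule fun_cong)
qed

lemma weight_extend_ge:
  assumes c: "c \<in> C" "c \<noteq> (\<lambda>_. 0)"
  shows "d \<le> weight_on {..<ext_length} (extend c)"
proof -
  let ?P = "{(j, i) \<in> {..<m} \<times> {k..<k + D}. encode (info_group r k j c) i \<noteq> 0}"
  have "finite ?P" by (rule finite_subset[of _ "{..<m} \<times> {k..<k + D}"]) auto
  have "{i \<in> {k..<k + D}. c i \<noteq> 0} \<subseteq> snd ` ?P"
  proof
    fix i assume i: "i \<in> {i \<in> {k..<k + D}. c i \<noteq> 0}"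
    then have "(\<Sum>j<m. encode (info_group r k j c) i) \<noteq> 0"
      using sum_encode_info_groups[OF c(1), of i] by simp
    then obtain j where "j < m" "encode (info_group r k j c) i \<noteq> 0"
      using sum.not_neutral_contains_not_neutral by blast
    then have "(j, i) \<in> ?P" using i by simp
    then show "i \<in> snd ` ?P" by (rule image_eqI[rotated]) simp
  qed
  then have "weight_on {k..<k + D} c \<le> card (snd ` ?P)"
    unfolding weight_on_def using \<open>finite ?P\<close> by (intro card_mono) auto
  also have "\<dots> \<le> weight_on {k..<k + m * D} (extend c)"
    unfolding weight_on_local_blocks by (rule card_image_le[OF \<open>finite ?P\<close>])
  finally have "weight_on {..<n} c \<le> weight_on {..<ext_length} (extend c)"
    unfolding weight_on_code_parts weight_extend by simp
  then show ?thesis using min_dist_le_weight[OF c] by simp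
qed

lemma exists_extend_weight_eq:
  "\<exists>c\<in>C. extend c \<noteq> (\<lambda>_. 0) \<and> weight_on {..<ext_length} (extend c) = d"
proof -
  define u :: "nat \<Rightarrow> 'a" where "u i = (if i = 0 then 1 else 0)" for i
  have u: "u \<in> vec_space k" using k_pos unfolding u_def vec_space_def by simp
  define c where "c = encode u"
  have "c \<in> C" unfolding c_def by (rule encode_in[OF u])
  have c_info: "info_part k c = u" unfolding c_def by (rule info_part_encode[OF u])
  have c_0: "c 0 = 1" and extend_c_0: "extend c 0 = 1"
    using fun_cong[OF c_info, of 0] k_pos extend_info[OF k_pos]
    unfolding info_part_def u_def by simp_all
  have groups: "info_group r k j c = (if j = 0 then u else (\<lambda>_. 0))" for j
  proof
    fix i show "info_group r k j c i = (if j = 0 then u else (\<lambda>_. 0)) i"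
      unfolding info_group_eq_info_part c_info by (cases "i = 0") (simp_all add: u_def)
  qed
  have "weight_on {..<k} c = weight_on {..<k} u"
    using c_info by (intro weight_on_cong) (metis info_part_def lessThan_iff)
  also have "\<dots> = 1"
  proof -
    have "{i \<in> {..<k}. u i \<noteq> 0} = {0}" using k_pos unfolding u_def by auto
    then show ?thesis unfolding weight_on_def by simp
  qed
  finally have w_info: "weight_on {..<k} c = 1" .
  have "weight_on {k..<k + m * D} (extend c) \<le> card ({0::nat} \<times> {k..<k + D})"
    unfolding weight_on_local_blocks
    by (intro card_mono) (auto simp: groups encode_zero split: if_splits)
  then have w_local: "weight_on {k..<k + m * D} (extend c) \<le> D" by (simp add: card_cartesian_product)
  have w_global: "weight_on {k + D..<n} c \<le> n - (k + D)"
    using weight_on_le_card[of "{k + D..<n}" c] by simp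
  have "weight_on {..<ext_length} (extend c) \<le> d"
    unfolding weight_extend using w_info w_local w_global length_eq D_less by linarith
  moreover have "d \<le> weight_on {..<ext_length} (extend c)"
    using weight_extend_ge[OF \<open>c \<in> C\<close>] c_0 by (metis one_neq_zero)
  moreover have "extend c \<noteq> (\<lambda>_. 0)" using extend_c_0 by (metis one_neq_zero)
  ultimately show ?thesis using \<open>c \<in> C\<close> by (intro bexI[of _ c]) simp_all
qed

definition group_coords :: "nat \<Rightarrow> nat set" where
  "group_coords j = {s. s < k \<and> s div r = j}"

definition local_parity_coords :: "nat \<Rightarrow> nat set" where
  "local_parity_coords j = (\<lambda>s. s + j * D) ` {k..<k + D}"

lemma group_coords_subset: "group_coords j \<subseteq> {..<k}"
  unfolding group_coords_def by auto

lemma local_parity_coords_subset: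
  assumes "j < m"
  shows "local_parity_coords j \<subseteq> {k..<k + m * D}"
  unfolding local_parity_coords_def block_index_image[of D m k, symmetric]
proof (rule image_subsetI)
  fix s assume "s \<in> {k..<k + D}"
  then show "s + j * D \<in> (\<lambda>(j, i). i + j * D) ` ({..<m} \<times> {k..<k + D})"
    using assms by (intro image_eqI[where x = "(j, s)"]) simp_all
qed

lemma card_repair_group_le: "card (group_coords j \<union> local_parity_coords j) \<le> r + D"
proof -
  have "card (group_coords j) \<le> r"
    unfolding group_coords_def by (rule card_info_group_le[OF r_pos])
  moreover have "card (local_parity_coords j) \<le> D"
    unfolding local_parity_coords_def using card_image_le[of "{k..<k + D}"] by simp
  ultimately show ?thesis
    using card_Un_le[of "group_coords j" "local_parity_coords j"] by linarith
qed

lemma weight_on_repair_group: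
  assumes "j < m"
  shows "weight_on (group_coords j \<union> local_parity_coords j) (extend c) =
    weight_on (group_coords j) (encode (info_group r k j c)) +
    weight_on {k..<k + D} (encode (info_group r k j c))"
proof -
  let ?e = "encode (info_group r k j c)"
  have "weight_on (group_coords j) (extend c) = weight_on (group_coords j) ?e"
    using encode_agrees[OF info_group_in_vec_space]
    by (intro weight_on_cong) (simp add: group_coords_def extend_info info_group_def)
  moreover have "weight_on (local_parity_coords j) (extend c) = weight_on {k..<k + D} ?e"
  proof -
    have "weight_on (local_parity_coords j) (extend c) =
        card {s \<in> {k..<k + D}. extend c (s + j * D) \<noteq> 0}"
      unfolding local_parity_coords_def by (rule weight_on_image) simp
    also have "\<dots> = weight_on {k..<k + D} ?e"
      unfolding weight_on_def
      by (intro arg_cong[where f = card] Collect_cong conj_cong refl)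
        (metis atLeastLessThan_iff extend_local assms)
    finally show ?thesis .
  qed
  moreover have "group_coords j \<inter> local_parity_coords j = {}"
    using group_coords_subset local_parity_coords_subset[OF assms] by fastforce
  moreover have "finite (group_coords j)" "finite (local_parity_coords j)"
    using group_coords_subset local_parity_coords_subset[OF assms] by (auto intro: finite_subset)
  ultimately show ?thesis by (simp add: weight_on_Un_disjoint)
qed

lemma repair_group_punct_dist:
  assumes "j < m"
  shows "punct_dist_ge (extend ` C) (group_coords j \<union> local_parity_coords j) (Suc D)"
  unfolding punct_dist_ge_def
proof (intro ballI impI)
  let ?S = "group_coords j \<union> local_parity_coords j"
  fix x assume "x \<in> extend ` C" and nonzero: "\<exists>t\<in>?S. x t \<noteq> 0"
  then obtain c where x: "x = extend c" by blast
  define e where "e = encode (info_group r k j c)"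
  have "e \<in> C" unfolding e_def by (rule encode_in[OF info_group_in_vec_space])
  have weight_S: "weight_on ?S x = weight_on (group_coords j) e + weight_on {k..<k + D} e"
    unfolding x e_def by (rule weight_on_repair_group[OF assms])
  have "finite ?S"
    using group_coords_subset local_parity_coords_subset[OF assms] by (auto intro: finite_subset)
  then have "0 < weight_on ?S x"
    unfolding weight_on_def using nonzero by (auto simp: card_gt_0_iff)
  then have "e \<noteq> (\<lambda>_. 0)" unfolding weight_S by (auto simp: weight_on_def)
  then have "d \<le> weight_on {..<n} e" by (rule min_dist_le_weight[OF \<open>e \<in> C\<close>])
  also have "\<dots> = weight_on (group_coords j) e + weight_on {k..<k + D} e + weight_on {k + D..<n} e"
    unfolding weight_on_code_parts using encode_agrees[OF info_group_in_vec_space]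
    by (subst weight_on_vanishing[OF group_coords_subset])
      (auto simp: group_coords_def e_def info_group_def)
  also have "\<dots> \<le> weight_on ?S x + (n - (k + D))"
    unfolding weight_S using weight_on_le_card[of "{k + D..<n}" e] by simp
  finally show "Suc D \<le> weight_on ?S x" using length_eq D_less by linarith
qed

lemma extend_locality:
  assumes "i < k"
  shows "has_locality ext_length (extend ` C) r (Suc D) i"
proof -
  let ?j = "i div r"
  let ?S = "group_coords ?j \<union> local_parity_coords ?j"
  have "?j < m" using assms groups_cover by (rule div_less_of_less_le_mult)
  have "?S \<subseteq> {..<ext_length}"
    using group_coords_subset local_parity_coords_subset[OF \<open>?j < m\<close>] blocks_le_ext_length
    by fastforce
  moreover have "i \<in> ?S" unfolding group_coords_def using assms by simp
  moreover have "card ?S \<le> r + Suc D - 1" using card_repair_group_le by simp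
  ultimately show ?thesis
    unfolding has_locality_def using repair_group_punct_dist[OF \<open>?j < m\<close>] by blast
qed

theorem extended_code_is_rdelta_i_code:
  "rdelta_i_code ext_length k d r (Suc D) (extend ` C)"
proof -
  have "systematic_code ext_length k (extend ` C)"
  proof (rule systematic_code_image[OF systematic])
    show "k \<le> ext_length" using blocks_le_ext_length by simp
  qed (rule extend_add extend_scale extend_in_vec_space info_part_extend)+
  moreover have "min_dist_eq ext_length (extend ` C) d"
    unfolding min_dist_eq_def
  proof
    show "\<forall>x\<in>extend ` C. x \<noteq> (\<lambda>_. 0) \<longrightarrow> d \<le> weight_on {..<ext_length} x"
      using weight_extend_ge extend_zero by auto
    show "\<exists>x\<in>extend ` C. x \<noteq> (\<lambda>_. 0) \<and> weight_on {..<ext_length} x = d"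
      using exists_extend_weight_eq by blast
  qed
  ultimately show ?thesis
    unfolding rdelta_i_code_def using extend_locality by blast
qed

end

lemma le_mult_nat_ceiling_divide:
  fixes k r :: nat
  assumes "0 < r"
  shows "k \<le> r * nat \<lceil>real k / real r\<rceil>"
proof -
  have "real k \<le> of_int \<lceil>real k / real r\<rceil> * real r"
    using ceiling_divide_upper[of "real r" "real k"] assms by simp
  also have "\<dots> = real (nat \<lceil>real k / real r\<rceil> * r)" by simp
  finally show ?thesis by (simp only: of_nat_le_iff mult.commute)
qed

theorem mainTheorem6:
  fixes k d r \<delta> :: nat
  assumes "k > 0" "d > 0" "r \<ge> 1" "\<delta> > 0" "\<delta> \<le> d"
    and "\<exists>C :: (nat \<Rightarrow> 'a::{field,finite}) set.
           systematic_code (k + d - 1) k C \<and> min_dist_eq (k + d - 1) C d"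
  shows "\<exists>C :: (nat \<Rightarrow> 'a) set.
           rdelta_i_code (k + d - 1 + (nat \<lceil>real k / real r\<rceil> - 1) * (\<delta> - 1)) k d r \<delta> C"
proof -
  obtain C :: "(nat \<Rightarrow> 'a) set" where
    "systematic_code (k + d - 1) k C" "min_dist_eq (k + d - 1) C d"
    using assms(6) by blast
  moreover have "k \<le> r * nat \<lceil>real k / real r\<rceil>"
    using assms(3) by (intro le_mult_nat_ceiling_divide) simp
  ultimately interpret local_extension "k + d - 1" k C d r "nat \<lceil>real k / real r\<rceil>" "\<delta> - 1"
    using assms by unfold_locales (simp_all add: systematic_def)
  have "Suc (\<delta> - 1) = \<delta>" using assms(4) by simp
  then show ?thesis using extended_code_is_rdelta_i_code by metis
qed

end
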